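(* Let $\psi\in C^1((0,\infty))$, $d>0$, and let $G=(V,E)$ be a finite graph with heat semigroup $(P_t)_{t\ge0}$. The following are equivalent: (1) $G$ satisfies $CD\psi(d,0)$. (2) For all $f\in C^+(V)$ and all $t\ge0$, \[ P_tf\;\Delta^\psi P_tf\ \ge\ P_t\!\left(f\,\Delta^\psi f\right)\left(1+\frac{2t}{d}\,\Delta^\psi P_tf\right). \] Moreover, if these hold, then $-\Delta^\psi P_tf\le\frac{d}{2t}$ for all $f\in C^+(V)$ and all $t>0$.
   Context: A finite graph $G=(V,E)$: finite set $V$, irreflexive symmetric relation $E$; $v\sim w$ iff $(v,w)\in E$. $C(V)$: real functions on $V$; $C^+(V)$: positive ones. Laplacian $\Delta f(v)=\sum_{w\sim v}(f(w)-f(v))$. Heat semigroup: $P_tf:=e^{t\Delta}f=\sum_{k\ge0}\frac{t^k\Delta^kf}{k!}$ for $t\ge0$ (it maps positive functions to positive functions). For $f\in C^+(V)$: $(\Delta^\psi f)(v):=\Delta\big[\psi\big(\tfrac{f}{f(v)}\big)\big](v)$; $(\Omega^\psi f)(v):=\Delta\Big[\psi'\big(\tfrac{f}{f(v)}\big)\cdot\tfrac{f}{f(v)}\cdot\big(\tfrac{\Delta f}{f}-\tfrac{(\Delta f)(v)}{f(v)}\big)\Big](v)$; $2\Gamma_2^\psi(f):=\Omega^\psi f+\frac{\Delta f\,\Delta^\psi f}{f}-\frac{\Delta(f\,\Delta^\psi f)}{f}$. $G$ satisfies $CD\psi(d,0)$ if $\Gamma_2^\psi(f)\ge\frac1d(\Delta^\psi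 f)^2$ for all $f\in C^+(V)$. All inequalities are pointwise on $V$. *)

theory Defs
  imports "HOL-Analysis.Analysis"
begin

text \<open>Finite graph: vertex set is the finite type 'a, edge relation E (symmetric, irreflexive).\<close>

definition graph_lap :: "('a::finite \<Rightarrow> 'a \<Rightarrow> bool) \<Rightarrow> ('a \<Rightarrow> real) \<Rightarrow> 'a \<Rightarrow> real" where
  "graph_lap E f v = (\<Sum>w\<in>{w. E v w}. f w - f v)"

definition heat_sg :: "('a::finite \<Rightarrow> 'a \<Rightarrow> bool) \<Rightarrow> real \<Rightarrow> ('a \<Rightarrow> real) \<Rightarrow> 'a \<Rightarrow> real" where
  "heat_sg E t f v = (\<Sum>k. t ^ k / fact k * ((graph_lap E ^^ k) f) v)"

definition lap_psi :: "('a::finite \<Rightarrow> 'a \<Rightarrow> bool) \<Rightarrow> (real \<Rightarrow> real) \<Rightarrow> ('a \<Rightarrow> real) \<Rightarrow> 'a \<Rightarrow> real" where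
  "lap_psi E \<psi> f v = graph_lap E (\<lambda>w. \<psi> (f w / f v)) v"

definition omega_psi :: "('a::finite \<Rightarrow> 'a \<Rightarrow> bool) \<Rightarrow> (real \<Rightarrow> real) \<Rightarrow> ('a \<Rightarrow> real) \<Rightarrow> 'a \<Rightarrow> real" where
  "omega_psi E \<psi>' f v = graph_lap E (\<lambda>w. \<psi>' (f w / f v) * (f w / f v)
       * (graph_lap E f w / f w - graph_lap E f v / f v)) v"

text \<open>gamma2_psi is \<open>\<Gamma>\<^sub>2\<^sup>\<psi>\<close> (half of the defining expression for \<open>2\<Gamma>\<^sub>2\<^sup>\<psi>\<close>).\<close>
definition gamma2_psi :: "('a::finite \<Rightarrow> 'a \<Rightarrow> bool) \<Rightarrow> (real \<Rightarrow> real) \<Rightarrow> (real \<Rightarrow> real) \<Rightarrow> ('a \<Rightarrow> real) \<Rightarrow> 'a \<Rightarrow> real" where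
  "gamma2_psi E \<psi> \<psi>' f v = (omega_psi E \<psi>' f v
       + graph_lap E f v * lap_psi E \<psi> f v / f v
       - graph_lap E (\<lambda>w. f w * lap_psi E \<psi> f w) v / f v) / 2"

definition CD_psi :: "('a::finite \<Rightarrow> 'a \<Rightarrow> bool) \<Rightarrow> (real \<Rightarrow> real) \<Rightarrow> (real \<Rightarrow> real) \<Rightarrow> real \<Rightarrow> bool" where
  "CD_psi E \<psi> \<psi>' d = (\<forall>f. (\<forall>v. f v > 0) \<longrightarrow>
       (\<forall>v. gamma2_psi E \<psi> \<psi>' f v \<ge> (lap_psi E \<psi> f v)\<^sup>2 / d))"

end

theory Submission
  imports Defs
begin

text \<open>
  Fix t and v, put g_s = P_{t-s} f and F(s) = P_s(g_s \<Delta>^\<psi> g_s)(v); F interpolates between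
  P_t f \<Delta>^\<psi> P_t f at s = 0 and P_t(f \<Delta>^\<psi> f) at s = t, and its derivative is
  -2 P_s(g_s \<Gamma>_2^\<psi>(g_s))(v). Under CD\<psi>(d,0), the Cauchy-Schwarz inequality for the positive
  operator P_s together with P_s g_s = P_t f turns this into the Riccati inequality
  F' \<le> -2 F^2 / (d P_t f(v)). Comparing 1/F with a linear function yields (2), and also
  F(t) \<le> F(0), from which the bound on -\<Delta>^\<psi> P_t f follows. Conversely, both sides of (2)
  agree at t = 0, so differentiating (2) at t = 0 gives CD\<psi>(d,0).
\<close>

section \<open>Exponentials of matrices acting on functions\<close>

definition mat_app :: "('a::finite \<Rightarrow> 'a \<Rightarrow> real) \<Rightarrow> ('a \<Rightarrow> real) \<Rightarrow> 'a \<Rightarrow> real" where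
  "mat_app m h v = (\<Sum>u\<in>UNIV. m v u * h u)"

definition l1_norm :: "('a::finite \<Rightarrow> real) \<Rightarrow> real" where
  "l1_norm h = (\<Sum>v\<in>UNIV. \<bar>h v\<bar>)"

definition mat_l1_norm :: "('a::finite \<Rightarrow> 'a \<Rightarrow> real) \<Rightarrow> real" where
  "mat_l1_norm m = (\<Sum>v\<in>UNIV. \<Sum>u\<in>UNIV. \<bar>m v u\<bar>)"

lemma abs_le_l1_norm: "\<bar>h v\<bar> \<le> l1_norm (h :: 'a::finite \<Rightarrow> real)"
  unfolding l1_norm_def by (rule member_le_sum) auto

lemma l1_norm_mat_app_le: "l1_norm (mat_app m h) \<le> mat_l1_norm m * l1_norm h"
proof -
  have "\<bar>mat_app m h v\<bar> \<le> (\<Sum>u\<in>UNIV. \<bar>m v u\<bar>) * l1_norm h" for v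
  proof -
    have "\<bar>mat_app m h v\<bar> \<le> (\<Sum>u\<in>UNIV. \<bar>m v u\<bar> * \<bar>h u\<bar>)"
      unfolding mat_app_def abs_mult[symmetric] by (rule sum_abs)
    also have "\<dots> \<le> (\<Sum>u\<in>UNIV. \<bar>m v u\<bar> * l1_norm h)"
      by (intro sum_mono mult_left_mono abs_le_l1_norm) auto
    finally show ?thesis by (simp add: sum_distrib_right)
  qed
  then have "l1_norm (mat_app m h) \<le> (\<Sum>v\<in>UNIV. (\<Sum>u\<in>UNIV. \<bar>m v u\<bar>) * l1_norm h)"
    unfolding l1_norm_def by (rule sum_mono)
  then show ?thesis by (simp add: mat_l1_norm_def sum_distrib_right)
qed

lemma abs_mat_app_power_le: "\<bar>(mat_app m ^^ k) h v\<bar> \<le> mat_l1_norm m ^ k * l1_norm h"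
proof -
  have "l1_norm ((mat_app m ^^ k) h) \<le> mat_l1_norm m ^ k * l1_norm h"
  proof (induction k)
    case (Suc k)
    have "l1_norm ((mat_app m ^^ Suc k) h) \<le> mat_l1_norm m * l1_norm ((mat_app m ^^ k) h)"
      by (simp add: l1_norm_mat_app_le)
    also have "\<dots> \<le> mat_l1_norm m * (mat_l1_norm m ^ k * l1_norm h)"
      using Suc by (intro mult_left_mono) (auto simp: mat_l1_norm_def intro: sum_nonneg)
    finally show ?case by (simp add: mult.assoc)
  qed simp
  then show ?thesis using abs_le_l1_norm order_trans by blast
qed

lemma mat_app_sum: "mat_app m (\<lambda>w. \<Sum>i\<in>I. h i w) v = (\<Sum>i\<in>I. mat_app m (h i) v)"
  unfolding mat_app_def by (simp add: sum_distrib_left sum.swap[of _ I])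

lemma mat_app_cmult: "mat_app m (\<lambda>w. c * h w) v = c * mat_app m h v"
  unfolding mat_app_def by (simp add: sum_distrib_left algebra_simps)

lemma mat_app_diff: "mat_app m (\<lambda>w. h w - g w) v = mat_app m h v - mat_app m g v"
  unfolding mat_app_def by (simp add: sum_subtractf algebra_simps)

lemma sum_delta_mult: "(\<Sum>u\<in>UNIV. (if u = v then a else 0) * (h u :: real)) = a * h (v::'a::finite)"
  by (simp add: if_distrib[of "\<lambda>x. x * _"] cong: if_cong)

lemma mat_app_power_kernel:
  "(mat_app m ^^ k) h v = (\<Sum>u\<in>UNIV. h u * (mat_app m ^^ k) (indicator {u}) v)"
proof (induction k arbitrary: v)
  case 0
  show ?case by (simp add: indicator_def if_distrib sum.delta cong: if_cong)
next
  case (Suc k)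
  have "(mat_app m ^^ k) h = (\<lambda>w. \<Sum>u\<in>UNIV. h u * (mat_app m ^^ k) (indicator {u}) w)"
    using Suc by auto
  then show ?case by (simp add: mat_app_sum mat_app_cmult)
qed

definition mat_exp :: "('a::finite \<Rightarrow> 'a \<Rightarrow> real) \<Rightarrow> real \<Rightarrow> ('a \<Rightarrow> real) \<Rightarrow> 'a \<Rightarrow> real" where
  "mat_exp m t h v = (\<Sum>k. t ^ k / fact k * (mat_app m ^^ k) h v)"

lemma summable_mat_exp: "summable (\<lambda>k. (mat_app m ^^ k) h v / fact k * t ^ k)"
proof (rule summable_comparison_test')
  show "summable (\<lambda>k. l1_norm h * (inverse (fact k) * (mat_l1_norm m * \<bar>t\<bar>) ^ k))"
    by (intro summable_mult summable_exp)
  fix k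
  have "norm ((mat_app m ^^ k) h v / fact k * t ^ k) = \<bar>(mat_app m ^^ k) h v\<bar> * \<bar>t\<bar> ^ k / fact k"
    by (simp add: abs_mult power_abs)
  also have "\<dots> \<le> mat_l1_norm m ^ k * l1_norm h * \<bar>t\<bar> ^ k / fact k"
    by (intro divide_right_mono mult_right_mono abs_mat_app_power_le) auto
  also have "\<dots> = l1_norm h * (inverse (fact k) * (mat_l1_norm m * \<bar>t\<bar>) ^ k)"
    by (simp add: field_simps power_mult_distrib)
  finally show "norm ((mat_app m ^^ k) h v / fact k * t ^ k)
      \<le> l1_norm h * (inverse (fact k) * (mat_l1_norm m * \<bar>t\<bar>) ^ k)" .
qed

lemma mat_exp_power_series: "mat_exp m t h v = (\<Sum>k. (mat_app m ^^ k) h v / fact k * t ^ k)"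
  unfolding mat_exp_def by (simp add: algebra_simps)

lemma summable_mat_exp': "summable (\<lambda>k. t ^ k / fact k * (mat_app m ^^ k) h v)"
  using summable_mat_exp[of m h v t] by (simp add: algebra_simps)

lemma mat_exp_zero [simp]: "mat_exp m 0 h v = h v"
  using powser_zero[of "\<lambda>k. (mat_app m ^^ k) h v / fact k"] by (simp add: mat_exp_power_series)

lemma mat_exp_has_real_derivative:
  "((\<lambda>t. mat_exp m t h v) has_real_derivative mat_exp m t (mat_app m h) v) (at t)"
proof -
  define c where "c k = (mat_app m ^^ k) h v / fact k" for k
  have "diffs c k = (mat_app m ^^ k) (mat_app m h) v / fact k" for k
    unfolding diffs_def c_def by (simp add: funpow_Suc_right del: funpow.simps)
  moreover have "((\<lambda>t. \<Sum>k. c k * t ^ k) has_real_derivative (\<Sum>k. diffs c k * t ^ k)) (at t)"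
    unfolding c_def by (intro termdiffs_strong_converges_everywhere summable_mat_exp)
  ultimately show ?thesis by (simp add: c_def mat_exp_power_series[abs_def])
qed

lemma mat_exp_kernel: "mat_exp m t h v = (\<Sum>u\<in>UNIV. h u * mat_exp m t (indicator {u}) v)"
proof -
  have "mat_exp m t h v = (\<Sum>k. \<Sum>u\<in>UNIV. h u * (t ^ k / fact k * (mat_app m ^^ k) (indicator {u}) v))"
    unfolding mat_exp_def by (subst mat_app_power_kernel) (simp add: sum_distrib_left algebra_simps)
  also have "\<dots> = (\<Sum>u\<in>UNIV. \<Sum>k. h u * (t ^ k / fact k * (mat_app m ^^ k) (indicator {u}) v))"
    by (intro suminf_sum summable_mult summable_mat_exp')
  also have "\<dots> = (\<Sum>u\<in>UNIV. h u * mat_exp m t (indicator {u}) v)"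
    unfolding mat_exp_def by (intro sum.cong refl suminf_mult summable_mat_exp')
  finally show ?thesis .
qed

lemma mat_app_mat_exp: "mat_app m (mat_exp m t h) v = mat_exp m t (mat_app m h) v"
proof -
  have "mat_app m (mat_exp m t h) v = (\<Sum>u\<in>UNIV. m v u * mat_exp m t h u)"
    by (rule mat_app_def)
  also have "\<dots> = (\<Sum>u\<in>UNIV. \<Sum>k. m v u * (t ^ k / fact k * (mat_app m ^^ k) h u))"
    unfolding mat_exp_def by (intro sum.cong refl suminf_mult[symmetric] summable_mat_exp')
  also have "\<dots> = (\<Sum>k. \<Sum>u\<in>UNIV. m v u * (t ^ k / fact k * (mat_app m ^^ k) h u))"
    by (intro suminf_sum[symmetric] summable_mult summable_mat_exp')
  also have "\<dots> = mat_exp m t (mat_app m h) v"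
  proof -
    have "(mat_app m ^^ k) (mat_app m h) v = (\<Sum>u\<in>UNIV. m v u * (mat_app m ^^ k) h u)" for k
      by (subst funpow_swap1[symmetric]) (rule mat_app_def)
    then show ?thesis unfolding mat_exp_def by (simp add: sum_distrib_left algebra_simps)
  qed
  finally show ?thesis .
qed

lemma mat_exp_nonneg:
  assumes "\<And>v u. m v u \<ge> 0" "\<And>w. h w \<ge> 0" "t \<ge> 0"
  shows "mat_exp m t h v \<ge> 0"
proof -
  have "(mat_app m ^^ k) h v \<ge> 0" for k v
    by (induction k arbitrary: v) (auto simp: mat_app_def assms intro!: sum_nonneg)
  then show ?thesis
    unfolding mat_exp_def using assms(3) by (intro suminf_nonneg summable_mat_exp') auto
qed

lemma mat_exp_family_has_real_derivative:
  assumes "\<And>w. ((\<lambda>s. H s w) has_real_derivative H' w) (at s)"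
  shows "((\<lambda>s. mat_exp m s (H s) v) has_real_derivative
           mat_exp m s (mat_app m (H s)) v + mat_exp m s H' v) (at s)"
proof -
  have "((\<lambda>s. \<Sum>u\<in>UNIV. H s u * mat_exp m s (indicator {u}) v) has_real_derivative
      (\<Sum>u\<in>UNIV. H' u * mat_exp m s (indicator {u}) v + mat_exp m s (mat_app m (indicator {u})) v * H s u)) (at s)"
    by (intro DERIV_sum DERIV_mult assms mat_exp_has_real_derivative)
  moreover have "(\<Sum>u\<in>UNIV. mat_exp m s (mat_app m (indicator {u})) v * H s u) = mat_exp m s (mat_app m (H s)) v"
  proof -
    have "mat_exp m s (H s) = (\<lambda>w. \<Sum>u\<in>UNIV. H s u * mat_exp m s (indicator {u}) w)"
      by (rule ext) (rule mat_exp_kernel)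
    then show ?thesis
      by (simp add: mat_app_mat_exp[symmetric] mat_app_cmult[symmetric] mat_app_sum[symmetric] mult.commute)
  qed
  moreover have "(\<lambda>s. mat_exp m s (H s) v) = (\<lambda>s. \<Sum>u\<in>UNIV. H s u * mat_exp m s (indicator {u}) v)"
    by (rule ext) (rule mat_exp_kernel)
  ultimately show ?thesis
    by (simp add: mat_exp_kernel[of m s H' v, symmetric] sum.distrib add.commute)
qed

section \<open>The heat semigroup\<close>

definition lap_mat :: "('a::finite \<Rightarrow> 'a \<Rightarrow> bool) \<Rightarrow> 'a \<Rightarrow> 'a \<Rightarrow> real" where
  "lap_mat E v u = (if E v u then 1 else 0) - (if u = v then real (card {w. E v w}) else 0)"

lemma graph_lap_eq_mat_app: "graph_lap E = mat_app (lap_mat E)"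
proof (intro ext)
  fix h :: "'a \<Rightarrow> real" and v
  have "(\<Sum>u\<in>UNIV. (if E v u then 1 else 0) * h u) = (\<Sum>u\<in>UNIV. if E v u then h u else 0)"
    by (rule sum.cong) auto
  then have "(\<Sum>w\<in>{w. E v w}. h w) = (\<Sum>u\<in>UNIV. (if E v u then 1 else 0) * h u)"
    using sum.inter_filter[of UNIV h "E v"] by simp
  then show "graph_lap E h v = mat_app (lap_mat E) h v"
    unfolding graph_lap_def mat_app_def lap_mat_def
    by (simp add: sum_subtractf left_diff_distrib sum_delta_mult)
qed

lemma graph_lap_cmult: "graph_lap E (\<lambda>w. c * h w) v = c * graph_lap E h v"
  by (simp add: graph_lap_eq_mat_app mat_app_cmult)

lemma graph_lap_has_real_derivative:
  assumes "\<And>w. ((\<lambda>s. \<phi> s w) has_real_derivative \<phi>' w) (at s)"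
  shows "((\<lambda>s. graph_lap E (\<phi> s) v) has_real_derivative graph_lap E \<phi>' v) (at s)"
  unfolding graph_lap_def by (intro DERIV_sum DERIV_diff assms)

lemma heat_sg_eq_mat_exp: "heat_sg E = mat_exp (lap_mat E)"
  by (intro ext) (simp add: heat_sg_def mat_exp_def graph_lap_eq_mat_app)

lemma heat_sg_has_real_derivative:
  "((\<lambda>t. heat_sg E t h v) has_real_derivative heat_sg E t (graph_lap E h) v) (at t)"
  by (simp add: heat_sg_eq_mat_exp graph_lap_eq_mat_app mat_exp_has_real_derivative)

lemma graph_lap_heat_sg: "graph_lap E (heat_sg E t h) v = heat_sg E t (graph_lap E h) v"
  by (simp add: heat_sg_eq_mat_exp graph_lap_eq_mat_app mat_app_mat_exp)

lemma heat_sg_zero [simp]: "heat_sg E 0 h = h"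
  by (simp add: heat_sg_eq_mat_exp fun_eq_iff)

lemma heat_sg_kernel: "heat_sg E t h v = (\<Sum>u\<in>UNIV. h u * heat_sg E t (indicator {u}) v)"
  by (simp add: heat_sg_eq_mat_exp mat_exp_kernel[of _ _ h])

lemma heat_sg_family_has_real_derivative:
  assumes "\<And>w. ((\<lambda>s. H s w) has_real_derivative H' w) (at s)"
  shows "((\<lambda>s. heat_sg E s (H s) v) has_real_derivative
           heat_sg E s (graph_lap E (H s)) v + heat_sg E s H' v) (at s)"
  using mat_exp_family_has_real_derivative[OF assms]
  by (simp add: heat_sg_eq_mat_exp graph_lap_eq_mat_app)

lemma heat_sg_add: "heat_sg E t (\<lambda>w. h w + g w) v = heat_sg E t h v + heat_sg E t g v"
  by (simp add: heat_sg_kernel[of E t "\<lambda>w. h w + g w"] heat_sg_kernel[of E t h]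
      heat_sg_kernel[of E t g] sum.distrib distrib_right)

lemma heat_sg_cmult: "heat_sg E t (\<lambda>w. c * h w) v = c * heat_sg E t h v"
  by (simp add: heat_sg_kernel[of E t "\<lambda>w. c * h w"] heat_sg_kernel[of E t h]
      sum_distrib_left mult.assoc)

lemma heat_sg_backward_has_real_derivative:
  "((\<lambda>s. heat_sg E (t - s) f w) has_real_derivative - graph_lap E (heat_sg E (t - s) f) w) (at s)"
proof -
  have "((\<lambda>s. heat_sg E (t - s) f w) has_real_derivative heat_sg E (t - s) (graph_lap E f) w * (0 - 1)) (at s)"
    by (rule DERIV_chain2[OF heat_sg_has_real_derivative DERIV_diff[OF DERIV_const DERIV_ident]])
  then show ?thesis by (simp add: graph_lap_heat_sg)
qed

lemma heat_sg_semigroup: "heat_sg E s (heat_sg E r f) v = heat_sg E (s + r) f v"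
proof -
  define t where "t = s + r"
  have "((\<lambda>x. heat_sg E x (heat_sg E (t - x) f) v) has_real_derivative 0) (at x)" for x
  proof -
    have "((\<lambda>x. heat_sg E x (heat_sg E (t - x) f) v) has_real_derivative
        heat_sg E x (graph_lap E (heat_sg E (t - x) f)) v
        + heat_sg E x (\<lambda>w. - graph_lap E (heat_sg E (t - x) f) w) v) (at x)"
      by (rule heat_sg_family_has_real_derivative) (rule heat_sg_backward_has_real_derivative)
    then show ?thesis by (simp add: heat_sg_cmult[of E x "-1", simplified])
  qed
  then have "heat_sg E s (heat_sg E (t - s) f) v = heat_sg E t (heat_sg E (t - t) f) v"
    by (intro DERIV_isconst_all) auto
  then show ?thesis by (simp add: t_def)
qed

lemma heat_sg_const: "heat_sg E t (\<lambda>_. c) v = c"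
proof -
  have "graph_lap E (\<lambda>_. c) = (\<lambda>_. 0)"
    by (simp add: graph_lap_def fun_eq_iff)
  then have "((\<lambda>t. heat_sg E t (\<lambda>_. c) v) has_real_derivative 0) (at t)" for t
    using heat_sg_has_real_derivative[of E "\<lambda>_. c" v t] by (simp add: heat_sg_kernel[of E t "\<lambda>_. 0"])
  then have "heat_sg E t (\<lambda>_. c) v = heat_sg E 0 (\<lambda>_. c) v"
    by (intro DERIV_isconst_all) auto
  then show ?thesis by simp
qed

section \<open>Positivity of the heat semigroup\<close>

context
  fixes E :: "'a::finite \<Rightarrow> 'a \<Rightarrow> bool"
  assumes sym: "\<And>v w. E v w \<Longrightarrow> E w v"
begin

lemma sum_mult_graph_lap_nonpos: "(\<Sum>v\<in>UNIV. g v * graph_lap E g v) \<le> 0"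
proof -
  define Q where "Q = (\<Sum>v\<in>UNIV. \<Sum>w\<in>UNIV. if E v w then g v * (g w - g v) else 0)"
  have Q: "(\<Sum>v\<in>UNIV. g v * graph_lap E g v) = Q"
    unfolding Q_def graph_lap_def by (simp add: sum_distrib_left sum.inter_filter[symmetric])
  have "Q = (\<Sum>w\<in>UNIV. \<Sum>v\<in>UNIV. if E v w then g v * (g w - g v) else 0)"
    unfolding Q_def by (rule sum.swap)
  also have "\<dots> = (\<Sum>v\<in>UNIV. \<Sum>w\<in>UNIV. if E v w then g w * (g v - g w) else 0)"
    using sym by (intro sum.cong refl) metis
  finally have Q_swap: "Q = \<dots>" .
  have "2 * Q = (\<Sum>v\<in>UNIV. \<Sum>w\<in>UNIV. if E v w then - (g w - g v)\<^sup>2 else 0)"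
    by (subst mult_2, subst (2) Q_swap)
      (simp add: Q_def sum.distrib[symmetric] power2_eq_square algebra_simps if_distrib cong: if_cong)
  also have "\<dots> \<le> 0" by (intro sum_nonpos) auto
  finally show ?thesis using Q by simp
qed

lemma heat_equation_zero_solution:
  assumes z': "\<And>s v. ((\<lambda>s. z s v) has_real_derivative graph_lap E (z s) v) (at s)"
    and z0: "\<And>v. z 0 v = 0" and "s \<ge> 0"
  shows "z s v = 0"
proof -
  define N where "N = (\<lambda>s. \<Sum>v\<in>UNIV. z s v * z s v)"
  have N': "(N has_real_derivative 2 * (\<Sum>v\<in>UNIV. z s v * graph_lap E (z s) v)) (at s)" for s
  proof -
    have "(N has_real_derivative (\<Sum>v\<in>UNIV. graph_lap E (z s) v * z s v + graph_lap E (z s) v * z s v)) (at s)"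
      unfolding N_def by (rule DERIV_sum) (rule DERIV_mult[OF z' z'])
    then show ?thesis by (simp add: sum_distrib_left algebra_simps)
  qed
  have "N s \<le> N 0"
    by (rule deriv_nonpos_imp_antimono[OF N' _ \<open>s \<ge> 0\<close>]) (simp add: sum_mult_graph_lap_nonpos)
  moreover have "N 0 = 0" by (simp add: N_def z0)
  ultimately have "N s = 0" by (simp add: N_def antisym sum_nonneg)
  then show ?thesis by (simp add: N_def sum_nonneg_eq_0_iff)
qed

lemma heat_sg_nonneg:
  assumes "s \<ge> 0" "\<And>w. h w \<ge> 0"
  shows "heat_sg E s h v \<ge> 0"
proof -
  define c where "c = real CARD('a)"
  define M where "M v u = lap_mat E v u + (if u = v then c else 0)" for v u
  have M_nonneg: "M v u \<ge> 0" for v u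
  proof -
    have "card {w. E v w} \<le> CARD('a)" by (rule card_mono) auto
    then show ?thesis unfolding M_def lap_mat_def c_def by auto
  qed
  have M_app: "mat_app M g v = graph_lap E g v + c * g v" for g v
    by (simp add: M_def mat_app_def graph_lap_eq_mat_app distrib_right sum.distrib sum_delta_mult)
  \<comment> \<open>\<open>M = \<Delta> + c\<close> has nonnegative entries, and \<open>e^(-cs) exp(sM) h\<close> solves the heat equation\<close>
  define w where "w s = (\<lambda>v. exp (- c * s) * mat_exp M s h v)" for s
  have "((\<lambda>s. heat_sg E s h v - w s v) has_real_derivative
          graph_lap E (\<lambda>v. heat_sg E s h v - w s v) v) (at s)" for s v
  proof -
    have "graph_lap E (w s) v = exp (- c * s) * graph_lap E (mat_exp M s h) v"
      unfolding w_def by (rule graph_lap_cmult)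
    also have "\<dots> = exp (- c * s) * (- c) * mat_exp M s h v + mat_exp M s (mat_app M h) v * exp (- c * s)"
      using M_app[of "mat_exp M s h" v] by (simp add: mat_app_mat_exp algebra_simps)
    finally have lap_w: "graph_lap E (w s) v = \<dots>" .
    have "((\<lambda>s. w s v) has_real_derivative
             exp (- c * s) * (- c) * mat_exp M s h v + mat_exp M s (mat_app M h) v * exp (- c * s)) (at s)"
      unfolding w_def
      by (intro DERIV_mult mat_exp_has_real_derivative) (auto intro!: derivative_eq_intros)
    then have "((\<lambda>s. heat_sg E s h v - w s v) has_real_derivative
                 graph_lap E (heat_sg E s h) v - graph_lap E (w s) v) (at s)"
      unfolding lap_w graph_lap_heat_sg by (intro DERIV_diff heat_sg_has_real_derivative)
    then show ?thesis
      by (simp only: graph_lap_eq_mat_app mat_app_diff)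
  qed
  then have "heat_sg E s h v - w s v = 0"
    by (rule heat_equation_zero_solution) (auto simp: w_def \<open>s \<ge> 0\<close>)
  moreover have "mat_exp M s h v \<ge> 0"
    by (rule mat_exp_nonneg) (use M_nonneg assms in auto)
  ultimately show ?thesis by (simp add: w_def)
qed

lemma heat_sg_mono:
  assumes "s \<ge> 0" "\<And>w. h w \<le> g w"
  shows "heat_sg E s h v \<le> heat_sg E s g v"
  unfolding heat_sg_kernel[of E s h] heat_sg_kernel[of E s g]
  by (intro sum_mono mult_right_mono assms heat_sg_nonneg) auto

lemma heat_sg_pos:
  assumes "s \<ge> 0" "\<And>w. f w > 0"
  shows "heat_sg E s f v > 0"
proof -
  have "Min (range f) > 0" using assms(2) by (subst Min_gr_iff) auto
  also have "Min (range f) = heat_sg E s (\<lambda>_. Min (range f)) v"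
    by (rule heat_sg_const[symmetric])
  also have "\<dots> \<le> heat_sg E s f v"
    by (rule heat_sg_mono[OF assms(1)]) simp
  finally show ?thesis .
qed

lemma heat_sg_Cauchy_Schwarz:
  assumes "s \<ge> 0" "\<And>w. g w > 0"
  shows "(heat_sg E s (\<lambda>w. g w * k w) v)\<^sup>2 \<le> heat_sg E s (\<lambda>w. g w * (k w)\<^sup>2) v * heat_sg E s g v"
proof -
  define p where "p u = heat_sg E s (indicator {u}) v" for u
  have p: "p u \<ge> 0" for u unfolding p_def by (rule heat_sg_nonneg[OF assms(1)]) auto
  define A where "A = (\<Sum>u\<in>UNIV. g u * (k u)\<^sup>2 * p u)"
  define B where "B = (\<Sum>u\<in>UNIV. g u * k u * p u)"
  define C where "C = (\<Sum>u\<in>UNIV. g u * p u)"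
  have C: "C = heat_sg E s g v" unfolding C_def p_def by (rule heat_sg_kernel[symmetric])
  then have C_pos: "C > 0" using heat_sg_pos[OF assms] by simp
  define l where "l = B / C"
  have "0 \<le> (\<Sum>u\<in>UNIV. g u * p u * (k u - l)\<^sup>2)"
    using assms(2) by (intro sum_nonneg mult_nonneg_nonneg p) (auto intro: less_imp_le)
  also have "\<dots> = A - 2 * l * B + l\<^sup>2 * C"
    unfolding A_def B_def C_def
    by (simp add: power2_eq_square algebra_simps sum.distrib sum_subtractf sum_distrib_left)
  also have "\<dots> = A - B\<^sup>2 / C"
    unfolding l_def using C_pos by (simp add: field_simps power2_eq_square)
  finally have "B\<^sup>2 \<le> A * C" using C_pos by (simp add: field_simps)
  moreover have "A = heat_sg E s (\<lambda>w. g w * (k w)\<^sup>2) v"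
    unfolding A_def p_def by (rule heat_sg_kernel[symmetric])
  moreover have "B = heat_sg E s (\<lambda>w. g w * k w) v"
    unfolding B_def p_def by (rule heat_sg_kernel[symmetric])
  ultimately show ?thesis using C by simp
qed
end


section \<open>The curvature-dimension condition along the heat flow\<close>

lemma lap_psi_has_real_derivative:
  assumes \<psi>: "\<And>x. x > 0 \<Longrightarrow> (\<psi> has_real_derivative \<psi>' x) (at x)"
    and pos: "\<And>w. g s w > 0"
    and g': "\<And>w. ((\<lambda>s. g s w) has_real_derivative c * graph_lap E (g s) w) (at s)"
  shows "((\<lambda>s. lap_psi E \<psi> (g s) v) has_real_derivative c * omega_psi E \<psi>' (g s) v) (at s)"
proof -
  have "((\<lambda>s. \<psi> (g s w / g s v)) has_real_derivative c * (\<psi>' (g s w / g s v) * (g s w / g s v)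
          * (graph_lap E (g s) w / g s w - graph_lap E (g s) v / g s v))) (at s)" for w
  proof -
    have "((\<lambda>s. \<psi> (g s w / g s v)) has_real_derivative \<psi>' (g s w / g s v)
        * ((c * graph_lap E (g s) w * g s v - g s w * (c * graph_lap E (g s) v)) / (g s v * g s v))) (at s)"
      by (intro DERIV_chain2[OF \<psi>] DERIV_divide g') (use pos[of w] pos[of v] in auto)
    moreover have "p * ((c * x * b - a * (c * y)) / (b * b)) = c * (p * (a / b) * (x / a - y / b))"
      if "a \<noteq> 0" "b \<noteq> 0" for p a b x y :: real
      using that by (simp add: field_simps)
    ultimately show ?thesis using pos[of w] pos[of v] by simp
  qed
  then show ?thesis
    unfolding lap_psi_def omega_psi_def graph_lap_cmult[symmetric]
    by (rule graph_lap_has_real_derivative)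
qed

lemma mult_gamma2_psi:
  assumes "g v \<noteq> 0"
  shows "2 * g v * gamma2_psi E \<psi> \<psi>' g v = g v * omega_psi E \<psi>' g v
           + graph_lap E g v * lap_psi E \<psi> g v - graph_lap E (\<lambda>w. g w * lap_psi E \<psi> g w) v"
  using assms unfolding gamma2_psi_def by (simp add: field_simps)

lemma riccati_reciprocal:
  fixes F F' :: "real \<Rightarrow> real"
  assumes "t \<ge> 0"
    and F': "\<And>s. 0 \<le> s \<Longrightarrow> s \<le> t \<Longrightarrow> (F has_real_derivative F' s) (at s)"
    and riccati: "\<And>s. 0 \<le> s \<Longrightarrow> s \<le> t \<Longrightarrow> F' s \<le> - c * (F s)\<^sup>2"
    and nonzero: "\<And>s. 0 \<le> s \<Longrightarrow> s \<le> t \<Longrightarrow> F s \<noteq> 0"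
  shows "1 / F 0 + c * t \<le> 1 / F t"
proof -
  have "1 / F 0 - c * 0 \<le> 1 / F t - c * t"
  proof (rule DERIV_nonneg_imp_nondecreasing[OF \<open>t \<ge> 0\<close>])
    fix s assume s: "0 \<le> s" "s \<le> t"
    have "((\<lambda>s. 1 / F s - c * s) has_real_derivative (0 * F s - 1 * F' s) / (F s * F s) - c * 1) (at s)"
      by (intro DERIV_diff DERIV_divide DERIV_const F' s DERIV_cmult DERIV_ident nonzero)
    moreover have "c * (F s * F s) \<le> - F' s"
      using riccati[OF s] by (simp add: power2_eq_square)
    then have "(0 * F s - 1 * F' s) / (F s * F s) - c * 1 \<ge> 0"
      using nonzero[OF s] by (simp add: field_simps)
    ultimately show "\<exists>y. ((\<lambda>s. 1 / F s - c * s) has_real_derivative y) (at s) \<and> 0 \<le> y"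
      by blast
  qed
  then show ?thesis by simp
qed

lemma riccati_comparison:
  fixes F F' :: "real \<Rightarrow> real"
  assumes "c \<ge> 0" "t \<ge> 0"
    and F': "\<And>s. 0 \<le> s \<Longrightarrow> s \<le> t \<Longrightarrow> (F has_real_derivative F' s) (at s)"
    and riccati: "\<And>s. 0 \<le> s \<Longrightarrow> s \<le> t \<Longrightarrow> F' s \<le> - c * (F s)\<^sup>2"
  shows "F t \<le> F 0" and "c * t * F 0 * F t \<le> F 0 - F t"
proof -
  have antimono: "F b \<le> F a" if "0 \<le> a" "a \<le> b" "b \<le> t" for a b
  proof (rule deriv_nonpos_imp_antimono[OF F' _ \<open>a \<le> b\<close>])
    fix s assume "s \<in> {a..b}"
    then have "0 \<le> s" "s \<le> t" using that by auto
    moreover have "- c * (F s)\<^sup>2 \<le> 0" using \<open>c \<ge> 0\<close> by simp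
    ultimately show "F' s \<le> 0" using riccati by fastforce
  qed (use that in auto)
  then show "F t \<le> F 0" using \<open>t \<ge> 0\<close> by simp
  consider "F 0 \<ge> 0" "F t \<le> 0" | "\<And>s. 0 \<le> s \<Longrightarrow> s \<le> t \<Longrightarrow> F s \<noteq> 0" "F 0 * F t > 0"
  proof (cases "F 0 < 0 \<or> F t > 0")
    case True
    then have "F s \<noteq> 0" if "0 \<le> s" "s \<le> t" for s
      using antimono[of 0 s] antimono[of s t] that by force
    moreover have "F 0 * F t > 0"
      using True antimono[of 0 t] \<open>t \<ge> 0\<close> by (auto simp: zero_less_mult_iff)
    ultimately show ?thesis using that by blast
  qed (use that in force)
  then show "c * t * F 0 * F t \<le> F 0 - F t"
  proof cases
    case 1
    then have "c * t * F 0 * F t \<le> 0"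
      using assms(1,2) by (intro mult_nonneg_nonpos mult_nonneg_nonneg) auto
    then show ?thesis using 1 by linarith
  next
    case 2
    then have "(1 / F 0 + c * t) * (F 0 * F t) \<le> 1 / F t * (F 0 * F t)"
      by (intro mult_right_mono riccati_reciprocal[OF \<open>t \<ge> 0\<close> F' riccati]) auto
    moreover have "F 0 \<noteq> 0" "F t \<noteq> 0" using 2 \<open>t \<ge> 0\<close> by auto
    then have "(1 / F 0 + c * t) * (F 0 * F t) = F t + c * t * F 0 * F t" "1 / F t * (F 0 * F t) = F 0"
      by (simp_all add: field_simps)
    ultimately show ?thesis by linarith
  qed
qed

lemma DERIV_nonneg_at_right_min:
  fixes G :: "real \<Rightarrow> real"
  assumes "(G has_real_derivative D) (at a)" "\<And>t. t \<ge> a \<Longrightarrow> G a \<le> G t"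
  shows "D \<ge> 0"
proof (rule ccontr)
  assume "\<not> D \<ge> 0"
  then obtain e where "e > 0" "\<And>h. 0 < h \<Longrightarrow> h < e \<Longrightarrow> G (a + h) < G a"
    using DERIV_neg_dec_right[OF assms(1)] by force
  then have "G (a + e / 2) < G a" by simp
  with assms(2)[of "a + e / 2"] \<open>e > 0\<close> show False by simp
qed

context
  fixes E :: "'a::finite \<Rightarrow> 'a \<Rightarrow> bool" and \<psi> \<psi>' :: "real \<Rightarrow> real" and d :: real
  assumes sym: "\<And>v w. E v w \<Longrightarrow> E w v"
    and \<psi>: "\<And>x. x > 0 \<Longrightarrow> (\<psi> has_real_derivative \<psi>' x) (at x)"
    and d_pos: "d > 0"
begin

lemma heat_flow_lap_psi_has_real_derivative:
  assumes f: "\<And>w. f w > 0" and "s \<le> t"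
  shows "((\<lambda>s. heat_sg E s (\<lambda>w. heat_sg E (t - s) f w * lap_psi E \<psi> (heat_sg E (t - s) f) w) v)
          has_real_derivative
           - 2 * heat_sg E s (\<lambda>w. heat_sg E (t - s) f w * gamma2_psi E \<psi> \<psi>' (heat_sg E (t - s) f) w) v)
         (at s)"
proof -
  define g where "g = (\<lambda>s. heat_sg E (t - s) f)"
  have g_pos: "g s w > 0" for w
    unfolding g_def using heat_sg_pos[of E, OF sym _ f] \<open>s \<le> t\<close> by simp
  have g': "((\<lambda>s. g s w) has_real_derivative -1 * graph_lap E (g s) w) (at s)" for s w
    unfolding g_def using heat_sg_backward_has_real_derivative by simp
  define H' where "H' w = - graph_lap E (g s) w * lap_psi E \<psi> (g s) w - omega_psi E \<psi>' (g s) w * g s w" for w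
  have "((\<lambda>s. g s w * lap_psi E \<psi> (g s) w) has_real_derivative H' w) (at s)" for w
    using DERIV_mult[OF g' lap_psi_has_real_derivative[OF \<psi> g_pos g']] by (simp add: H'_def)
  then have "((\<lambda>s. heat_sg E s (\<lambda>w. g s w * lap_psi E \<psi> (g s) w) v) has_real_derivative
      heat_sg E s (\<lambda>w. graph_lap E (\<lambda>w. g s w * lap_psi E \<psi> (g s) w) w + H' w) v) (at s)"
    unfolding heat_sg_add by (rule heat_sg_family_has_real_derivative)
  moreover have "(\<lambda>w. graph_lap E (\<lambda>w. g s w * lap_psi E \<psi> (g s) w) w + H' w)
                   = (\<lambda>w. - 2 * (g s w * gamma2_psi E \<psi> \<psi>' (g s) w))"
  proof
    fix w
    show "graph_lap E (\<lambda>w. g s w * lap_psi E \<psi> (g s) w) w + H' w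
            = - 2 * (g s w * gamma2_psi E \<psi> \<psi>' (g s) w)"
      using mult_gamma2_psi[of "g s" w E \<psi> \<psi>'] g_pos[of w] by (simp add: H'_def algebra_simps)
  qed
  ultimately show ?thesis
    using heat_sg_cmult[of E s "-2" "\<lambda>w. g s w * gamma2_psi E \<psi> \<psi>' (g s) w" v] by (simp add: g_def)
qed

lemma CD_heat_flow_riccati:
  assumes CD: "CD_psi E \<psi> \<psi>' d" and f: "\<And>w. f w > 0" and "0 \<le> s" "s \<le> t"
  shows "- 2 * heat_sg E s (\<lambda>w. heat_sg E (t - s) f w * gamma2_psi E \<psi> \<psi>' (heat_sg E (t - s) f) w) v
           \<le> - (2 / (d * heat_sg E t f v))
               * (heat_sg E s (\<lambda>w. heat_sg E (t - s) f w * lap_psi E \<psi> (heat_sg E (t - s) f) w) v)\<^sup>2"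
proof -
  define g where "g = heat_sg E (t - s) f"
  have g_pos: "g w > 0" for w
    unfolding g_def using heat_sg_pos[of E, OF sym _ f] \<open>s \<le> t\<close> by simp
  have P_pos: "heat_sg E t f v > 0" using heat_sg_pos[of E, OF sym _ f] \<open>0 \<le> s\<close> \<open>s \<le> t\<close> by simp
  have "(heat_sg E s (\<lambda>w. g w * lap_psi E \<psi> g w) v)\<^sup>2
          \<le> heat_sg E s (\<lambda>w. g w * (lap_psi E \<psi> g w)\<^sup>2) v * heat_sg E s g v"
    by (rule heat_sg_Cauchy_Schwarz[of E, OF sym \<open>0 \<le> s\<close> g_pos])
  also have "heat_sg E s g v = heat_sg E t f v"
    using \<open>s \<le> t\<close> by (simp add: g_def heat_sg_semigroup)
  also have "heat_sg E s (\<lambda>w. g w * (lap_psi E \<psi> g w)\<^sup>2) v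
               \<le> heat_sg E s (\<lambda>w. d * (g w * gamma2_psi E \<psi> \<psi>' g w)) v"
  proof (rule heat_sg_mono[of E, OF sym \<open>0 \<le> s\<close>])
    fix w
    have "(lap_psi E \<psi> g w)\<^sup>2 \<le> d * gamma2_psi E \<psi> \<psi>' g w"
      using CD g_pos d_pos unfolding CD_psi_def by (simp add: divide_le_eq mult.commute)
    then show "g w * (lap_psi E \<psi> g w)\<^sup>2 \<le> d * (g w * gamma2_psi E \<psi> \<psi>' g w)"
      using g_pos[of w] by (simp add: mult.left_commute)
  qed
  finally have "(heat_sg E s (\<lambda>w. g w * lap_psi E \<psi> g w) v)\<^sup>2
                  \<le> d * heat_sg E t f v * heat_sg E s (\<lambda>w. g w * gamma2_psi E \<psi> \<psi>' g w) v"
    using P_pos by (simp add: heat_sg_cmult mult_right_mono mult_ac)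
  then show ?thesis
    using P_pos d_pos by (simp add: g_def field_simps)
qed

lemma CD_imp_heat_sg_lap_psi_ineq:
  assumes CD: "CD_psi E \<psi> \<psi>' d" and f: "\<And>w. f w > 0" and "t \<ge> 0"
  shows "heat_sg E t (\<lambda>w. f w * lap_psi E \<psi> f w) v * (1 + 2 * t / d * lap_psi E \<psi> (heat_sg E t f) v)
           \<le> heat_sg E t f v * lap_psi E \<psi> (heat_sg E t f) v"
    and "heat_sg E t (\<lambda>w. f w * lap_psi E \<psi> f w) v \<le> heat_sg E t f v * lap_psi E \<psi> (heat_sg E t f) v"
proof -
  define F where "F = (\<lambda>s. heat_sg E s (\<lambda>w. heat_sg E (t - s) f w * lap_psi E \<psi> (heat_sg E (t - s) f) w) v)"
  define P where "P = heat_sg E t f v"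
  have P_pos: "P > 0" unfolding P_def using heat_sg_pos[of E, OF sym \<open>t \<ge> 0\<close> f] .
  define F' where "F' = (\<lambda>s. - 2 * heat_sg E s (\<lambda>w. heat_sg E (t - s) f w
                                   * gamma2_psi E \<psi> \<psi>' (heat_sg E (t - s) f) w) v)"
  have "(F has_real_derivative F' s) (at s)" if "s \<le> t" for s
    unfolding F_def F'_def using f that by (rule heat_flow_lap_psi_has_real_derivative)
  moreover have "F' s \<le> - (2 / (d * P)) * (F s)\<^sup>2" if "0 \<le> s" "s \<le> t" for s
    unfolding F_def F'_def P_def using CD f that by (rule CD_heat_flow_riccati)
  moreover have "2 / (d * P) \<ge> 0" using d_pos P_pos by simp
  ultimately have "F t \<le> F 0" and "2 / (d * P) * t * F 0 * F t \<le> F 0 - F t"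
    using riccati_comparison[of "2 / (d * P)" t F F'] \<open>t \<ge> 0\<close> by auto
  moreover have F0: "F 0 = P * lap_psi E \<psi> (heat_sg E t f) v"
    and "F t = heat_sg E t (\<lambda>w. f w * lap_psi E \<psi> f w) v"
    by (simp_all add: F_def P_def)
  moreover have "2 / (d * P) * t * F 0 * F t = F t * (2 * t / d * lap_psi E \<psi> (heat_sg E t f) v)"
    using P_pos unfolding F0 by (simp add: field_simps)
  ultimately show "heat_sg E t (\<lambda>w. f w * lap_psi E \<psi> f w) v * (1 + 2 * t / d * lap_psi E \<psi> (heat_sg E t f) v)
           \<le> heat_sg E t f v * lap_psi E \<psi> (heat_sg E t f) v"
    and "heat_sg E t (\<lambda>w. f w * lap_psi E \<psi> f w) v \<le> heat_sg E t f v * lap_psi E \<psi> (heat_sg E t f) v"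
    by (simp_all add: P_def algebra_simps)
qed

lemma CD_imp_lap_psi_heat_sg_lower_bound:
  assumes CD: "CD_psi E \<psi> \<psi>' d" and f: "\<And>w. f w > 0" and "t > 0"
  shows "- lap_psi E \<psi> (heat_sg E t f) v \<le> d / (2 * t)"
proof (cases "lap_psi E \<psi> (heat_sg E t f) v \<ge> 0")
  case True
  moreover have "d / (2 * t) > 0" using d_pos \<open>t > 0\<close> by simp
  ultimately show ?thesis by linarith
next
  case False
  define L where "L = lap_psi E \<psi> (heat_sg E t f) v"
  define Q where "Q = heat_sg E t (\<lambda>w. f w * lap_psi E \<psi> f w) v"
  have "heat_sg E t f v > 0" using heat_sg_pos[of E, OF sym _ f] \<open>t > 0\<close> by simp
  then have PL: "heat_sg E t f v * L < 0" using False by (simp add: L_def mult_pos_neg)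
  have ineq: "Q * (1 + 2 * t / d * L) \<le> heat_sg E t f v * L" "Q \<le> heat_sg E t f v * L"
    using CD_imp_heat_sg_lap_psi_ineq[OF CD f less_imp_le[OF \<open>t > 0\<close>]] by (simp_all add: L_def Q_def)
  have "1 + 2 * t / d * L \<ge> 0"
  proof (rule ccontr)
    assume "\<not> 1 + 2 * t / d * L \<ge> 0"
    then have "Q * (1 + 2 * t / d * L) > 0" using ineq(2) PL by (simp add: mult_neg_neg)
    with ineq(1) PL show False by linarith
  qed
  then show ?thesis using \<open>t > 0\<close> d_pos by (simp add: L_def field_simps)
qed

lemma heat_sg_lap_psi_ineq_imp_CD:
  assumes ineq: "\<And>f t v. (\<And>w. f w > 0) \<Longrightarrow> t \<ge> 0 \<Longrightarrow>
      heat_sg E t (\<lambda>w. f w * lap_psi E \<psi> f w) v * (1 + 2 * t / d * lap_psi E \<psi> (heat_sg E t f) v)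
        \<le> heat_sg E t f v * lap_psi E \<psi> (heat_sg E t f) v"
  shows "CD_psi E \<psi> \<psi>' d"
  unfolding CD_psi_def
proof (intro allI impI)
  fix f :: "'a \<Rightarrow> real" and v
  assume f: "\<forall>v. f v > 0"
  define P where "P = (\<lambda>t. heat_sg E t f v)"
  define Q where "Q = (\<lambda>t. heat_sg E t (\<lambda>w. f w * lap_psi E \<psi> f w) v)"
  define L where "L = (\<lambda>t. lap_psi E \<psi> (heat_sg E t f) v)"
  have P': "(P has_real_derivative graph_lap E f v) (at 0)"
    using heat_sg_has_real_derivative[of E f v 0] by (simp add: P_def)
  have Q': "(Q has_real_derivative graph_lap E (\<lambda>w. f w * lap_psi E \<psi> f w) v) (at 0)"
    using heat_sg_has_real_derivative[of E _ v 0] by (simp add: Q_def)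
  have L': "(L has_real_derivative 1 * omega_psi E \<psi>' f v) (at 0)"
  proof -
    have "((\<lambda>s. lap_psi E \<psi> (heat_sg E s f) v) has_real_derivative 1 * omega_psi E \<psi>' (heat_sg E 0 f) v) (at 0)"
      by (rule lap_psi_has_real_derivative[OF \<psi>])
        (use f heat_sg_has_real_derivative[of E f _ 0] in \<open>simp_all add: graph_lap_heat_sg\<close>)
    then show ?thesis by (simp add: L_def)
  qed
  have "((\<lambda>t. Q t * (1 + 2 * t / d * L t) - P t * L t) has_real_derivative
         graph_lap E (\<lambda>w. f w * lap_psi E \<psi> f w) v + 2 / d * f v * (L 0)\<^sup>2
         - graph_lap E f v * L 0 - omega_psi E \<psi>' f v * f v) (at 0)"
    using P' Q' L' d_pos by (auto intro!: derivative_eq_intros simp: P_def Q_def L_def field_simps power2_eq_square)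
  moreover have "\<And>t. t \<ge> 0 \<Longrightarrow> Q t * (1 + 2 * t / d * L t) - P t * L t \<le> 0"
    using ineq f by (simp add: P_def Q_def L_def)
  moreover have "Q 0 * (1 + 2 * 0 / d * L 0) - P 0 * L 0 = 0"
    by (simp add: P_def Q_def L_def)
  ultimately have "0 \<le> - (graph_lap E (\<lambda>w. f w * lap_psi E \<psi> f w) v + 2 / d * f v * (L 0)\<^sup>2
                            - graph_lap E f v * L 0 - omega_psi E \<psi>' f v * f v)"
    by (intro DERIV_nonneg_at_right_min[OF DERIV_minus]) auto
  also have "\<dots> = 2 * f v * (gamma2_psi E \<psi> \<psi>' f v - (lap_psi E \<psi> f v)\<^sup>2 / d)"
    using mult_gamma2_psi[of f v E \<psi> \<psi>'] f[rule_format, of v] by (simp add: L_def algebra_simps)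
  finally show "gamma2_psi E \<psi> \<psi>' f v \<ge> (lap_psi E \<psi> f v)\<^sup>2 / d"
    using f[rule_format, of v] by (simp add: zero_le_mult_iff)
qed

end

theorem mainTheorem8:
  fixes E :: "'a::finite \<Rightarrow> 'a \<Rightarrow> bool"
    and \<psi> \<psi>' :: "real \<Rightarrow> real" and d :: real
  assumes sym: "\<And>v w. E v w \<Longrightarrow> E w v"
    and irrefl: "\<And>v. \<not> E v v"
    and deriv: "\<And>x. x > 0 \<Longrightarrow> (\<psi> has_real_derivative \<psi>' x) (at x)"
    and cont: "continuous_on {0<..} \<psi>'"
    and d_pos: "d > 0"
  shows "(CD_psi E \<psi> \<psi>' d \<longleftrightarrow>
          (\<forall>f. (\<forall>v. f v > 0) \<longrightarrow> (\<forall>t\<ge>0. \<forall>v.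
             heat_sg E t f v * lap_psi E \<psi> (heat_sg E t f) v
             \<ge> heat_sg E t (\<lambda>w. f w * lap_psi E \<psi> f w) v
                 * (1 + 2 * t / d * lap_psi E \<psi> (heat_sg E t f) v))))
       \<and> (CD_psi E \<psi> \<psi>' d \<longrightarrow>
          (\<forall>f. (\<forall>v. f v > 0) \<longrightarrow> (\<forall>t>0. \<forall>v.
             - lap_psi E \<psi> (heat_sg E t f) v \<le> d / (2 * t))))"
  using CD_imp_heat_sg_lap_psi_ineq(1)[of E, OF sym deriv d_pos]
    heat_sg_lap_psi_ineq_imp_CD[of E, OF sym deriv d_pos]
    CD_imp_lap_psi_heat_sg_lower_bound[of E, OF sym deriv d_pos]
  by blast

end
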